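(* Let $g$ be a $C^1$ function near $0$ in $\mathbb{R}$ with $g(0)=0$, $g'(0)>0$, and let $V(x)=\int_0^x g(s)\,ds$. Let $J\ni 0$ be an open interval such that $V$ is strictly increasing on $J\cap(0,\infty)$, strictly decreasing on $J\cap(-\infty,0)$, and for each $x\in J$ there is a unique $h(x)\in J$ with $V(h(x))=V(x)$ and $\operatorname{sgn}h(x)=-\operatorname{sgn}x$. Fix $x_0\in J$ with $x_0>0$, let $t\mapsto X(t,x_0)$ be the (periodic) solution of $\ddot x=-g(x)$ with $X(0,x_0)=x_0$, $\partial_tX(0,x_0)=0$, and let $\mathcal T(x_0)$ be its period. Consider the $\mathcal T(x_0)$-periodic linear equation \[ \ddot y=-g'\big(X(t,x_0)\big)\,y . \] Then either all solutions of this equation are $\mathcal T(x_0)$-periodic, or all its solutions are unbounded except those proportional to $t\mapsto\partial_tX(t,x_0)$. A necessary and sufficient condition for the former case is $\mathcal T'(x_0)=0$.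
   Context: $\mathcal T$ is $C^1$ on $\{x_0\in J:x_0>0\}$, so $\mathcal T'(x_0)$ is defined. *)

theory Defs
  imports "HOL-Analysis.Analysis"
begin

definition potential :: "(real \<Rightarrow> real) \<Rightarrow> real \<Rightarrow> real" where
  "potential g x = (if 0 \<le> x then integral {0..x} g else - integral {x..0} g)"

definition hill_solution :: "(real \<Rightarrow> real) \<Rightarrow> (real \<Rightarrow> real) \<Rightarrow> bool" where
  "hill_solution q y \<longleftrightarrow> (\<exists>y'. \<forall>t. (y has_real_derivative y' t) (at t) \<and>
                                      (y' has_real_derivative (- q t * y t)) (at t))"

end

theory Submission
  imports Defs
begin

text \<open>Along the orbit \<open>X(\<cdot>, x\<^sub>0)\<close> the linearised equation \<open>y'' = -q y\<close>, \<open>q = g' \<circ> X\<close>, has the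
  \<open>T\<close>-periodic solution \<open>P = \<partial>\<^sub>tX\<close>, which never vanishes together with its derivative.
  Reduction of order yields a second solution \<open>y\<^sub>2\<close> with Wronskian \<open>W(P, y\<^sub>2) = 1\<close> and
  \<open>y\<^sub>2(t + T) = y\<^sub>2(t) + \<kappa> P(t)\<close> for a constant drift \<open>\<kappa>\<close>.  So all solutions are
  \<open>T\<close>-periodic if \<open>\<kappa> = 0\<close>, while for \<open>\<kappa> \<noteq> 0\<close> every solution with a \<open>y\<^sub>2\<close>-component drifts
  linearly and is unbounded.

  The drift is identified by differentiating \<open>X(T(x), x) = x\<close> in \<open>x\<close>: the Wronskian of any
  solution \<open>y\<close> with the variational solution \<open>\<partial>\<^sub>xX\<close> is constant, and comparing it at times
  \<open>0\<close> and \<open>T\<close> gives \<open>y(T) g(x\<^sub>0) T'(x\<^sub>0) = y'(T) - y'(0)\<close>.  For \<open>y = y\<^sub>2\<close> this reads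
  \<open>T'(x\<^sub>0) = -\<kappa> g(x\<^sub>0)\<close> with \<open>g(x\<^sub>0) \<noteq> 0\<close>.  The difference quotients of \<open>X\<close> are controlled
  by Gronwall-type energy estimates on a compact interval that traps all orbits near \<open>x\<^sub>0\<close>.\<close>

section \<open>Linear growth estimates for second-order equations\<close>

lemma exp_growth_of_deriv_le:
  fixes E E' :: "real \<Rightarrow> real"
  assumes deriv: "\<And>t. (E has_real_derivative E' t) (at t)"
    and growth: "\<And>t. E' t \<le> K * E t" and "t \<ge> 0"
  shows "E t \<le> E 0 * exp (K * t)"
proof -
  define F where "F s = E s * exp (- K * s)" for s
  have "(F has_real_derivative (E' s - K * E s) * exp (- K * s)) (at s)" for s
    unfolding F_def by (rule derivative_eq_intros deriv refl | simp add: algebra_simps)+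
  moreover have "(E' s - K * E s) * exp (- K * s) \<le> 0" for s
    using growth[of s] by (simp add: mult_nonneg_nonpos2 mult_le_0_iff)
  ultimately have "F t \<le> F 0"
    using DERIV_nonpos_imp_nonincreasing[OF \<open>t \<ge> 0\<close>] by blast
  hence "E t * exp (- K * t) * exp (K * t) \<le> E 0 * exp (K * t)"
    by (simp add: F_def mult_right_mono)
  thus ?thesis by (simp add: exp_minus field_simps)
qed

lemma second_order_energy_growth:
  fixes y y' F :: "real \<Rightarrow> real"
  assumes y: "\<And>t. (y has_real_derivative y' t) (at t)" and y': "\<And>t. (y' has_real_derivative F t) (at t)"
    and F: "\<And>t. \<bar>F t\<bar> \<le> L * \<bar>y t\<bar>" and "L \<ge> 0" and "t \<ge> 0"
  shows "(y t)\<^sup>2 + (y' t)\<^sup>2 \<le> ((y 0)\<^sup>2 + (y' 0)\<^sup>2) * exp ((1 + L) * t)"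
proof (rule exp_growth_of_deriv_le[OF _ _ \<open>t \<ge> 0\<close>])
  show "((\<lambda>s. (y s)\<^sup>2 + (y' s)\<^sup>2) has_real_derivative 2 * y s * y' s + 2 * y' s * F s) (at s)" for s
    by (rule derivative_eq_intros y y' refl | simp)+
  show "2 * y s * y' s + 2 * y' s * F s \<le> (1 + L) * ((y s)\<^sup>2 + (y' s)\<^sup>2)" for s
  proof -
    have "2 * y' s * F s \<le> 2 * \<bar>y' s\<bar> * (L * \<bar>y s\<bar>)"
    proof -
      have "2 * y' s * F s \<le> 2 * \<bar>y' s\<bar> * \<bar>F s\<bar>" by (simp add: abs_mult[symmetric])
      thus ?thesis using F[of s] by (smt (verit) abs_ge_zero mult_left_mono zero_le_mult_iff)
    qed
    also have "\<dots> \<le> L * ((y s)\<^sup>2 + (y' s)\<^sup>2)"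
      using mult_left_mono[OF sum_squares_bound[of "\<bar>y' s\<bar>" "\<bar>y s\<bar>"] \<open>L \<ge> 0\<close>]
      by (simp add: algebra_simps)
    finally show ?thesis
      using sum_squares_bound[of "y s" "y' s"] by (simp add: algebra_simps)
  qed
qed

text \<open>The energy estimate is applied to \<open>s \<mapsto> y (t\<^sub>0 + \<sigma> s)\<close> with \<open>\<sigma> = \<plusminus>1\<close>, so that
  it reaches times on either side of \<open>t\<^sub>0\<close>.\<close>
lemma second_order_zero_unique:
  fixes y y' F :: "real \<Rightarrow> real"
  assumes y: "\<And>t. (y has_real_derivative y' t) (at t)" and y': "\<And>t. (y' has_real_derivative F t) (at t)"
    and F: "\<And>t. \<bar>F t\<bar> \<le> L * \<bar>y t\<bar>" and L: "L \<ge> 0" and zero: "y t\<^sub>0 = 0" "y' t\<^sub>0 = 0"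
  shows "y t = 0"
proof -
  obtain \<sigma> :: real where \<sigma>: "\<sigma>\<^sup>2 = 1" "t = t\<^sub>0 + \<sigma> * \<bar>t - t\<^sub>0\<bar>"
    by (cases "t\<^sub>0 \<le> t") (auto intro: that[of 1] that[of "-1"])
  have "((\<lambda>s. t\<^sub>0 + \<sigma> * s) has_real_derivative \<sigma>) (at s)" for s
    by (rule derivative_eq_intros refl | simp)+
  note shift = DERIV_chain2[OF _ this]
  have z: "((\<lambda>s. y (t\<^sub>0 + \<sigma> * s)) has_real_derivative \<sigma> * y' (t\<^sub>0 + \<sigma> * s)) (at s)" for s
    by (rule DERIV_cong[OF shift[OF y]]) simp
  have z': "((\<lambda>s. \<sigma> * y' (t\<^sub>0 + \<sigma> * s)) has_real_derivative F (t\<^sub>0 + \<sigma> * s)) (at s)" for s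
    by (rule DERIV_cong[OF DERIV_cmult[OF shift[OF y']]]) (use \<sigma>(1) in \<open>simp add: power2_eq_square\<close>)
  have "(y (t\<^sub>0 + \<sigma> * \<bar>t - t\<^sub>0\<bar>))\<^sup>2 + (\<sigma> * y' (t\<^sub>0 + \<sigma> * \<bar>t - t\<^sub>0\<bar>))\<^sup>2 \<le> 0"
    using second_order_energy_growth[OF z z' _ L, of "\<bar>t - t\<^sub>0\<bar>"] F zero by simp
  thus ?thesis using \<sigma>(2) by (simp add: sum_power2_le_zero_iff)
qed

lemma hill_zero_unique:
  fixes y y' q :: "real \<Rightarrow> real"
  assumes "\<And>t. (y has_real_derivative y' t) (at t)" "\<And>t. (y' has_real_derivative - q t * y t) (at t)"
    and q: "\<And>t. \<bar>q t\<bar> \<le> L" and "y t\<^sub>0 = 0" "y' t\<^sub>0 = 0"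
  shows "y t = 0"
proof (rule second_order_zero_unique[OF assms(1,2) _ _ assms(4,5)])
  show "\<bar>- q t * y t\<bar> \<le> L * \<bar>y t\<bar>" for t
    using q[of t] by (simp add: abs_mult mult_right_mono)
  show "L \<ge> 0" using q[of 0] by linarith
qed

section \<open>Energy and confinement\<close>

lemma open_interval_enlarge:
  fixes I :: "real set"
  assumes "open I" "is_interval I" "u \<in> I" "v \<in> I"
  obtains a b where "a < u" "v < b" "{a..b} \<subseteq> I"
proof -
  obtain e e' where e: "e > 0" "ball u e \<subseteq> I" and e': "e' > 0" "ball v e' \<subseteq> I"
    using openE[OF assms(1)] assms(3,4) by metis
  have "u - e/2 \<in> ball u e" "v + e'/2 \<in> ball v e'"
    using e e' by (simp_all add: dist_real_def)
  hence "u - e/2 \<in> I" "v + e'/2 \<in> I" using e e' by blast+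
  hence "{u - e/2..v + e'/2} \<subseteq> I"
    using interval_subset_is_interval[OF assms(2)] by (simp add: cbox_interval)
  thus thesis using e e' by (intro that) auto
qed

lemma potential_has_real_derivative:
  fixes f :: "real \<Rightarrow> real"
  assumes I: "open I" "is_interval I" "0 \<in> I" and f: "continuous_on I f" and x: "x \<in> I"
  shows "(potential f has_real_derivative f x) (at x)"
proof -
  have "min x 0 \<in> I" "max x 0 \<in> I" using x I(3) by (simp_all add: min_def max_def)
  then obtain a b where ab: "a < min x 0" "max x 0 < b" "{a..b} \<subseteq> I"
    using open_interval_enlarge[OF I(1,2)] by blast
  have int: "f integrable_on {u..v}" if "a \<le> u" "v \<le> b" for u v
    using that ab(3) by (intro integrable_continuous_real continuous_on_subset[OF f]) auto
  have eq: "potential f u = integral {a..u} f - integral {a..0} f" if "u \<in> {a<..<b}" for u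
  proof (cases "0 \<le> u")
    case True
    have "integral {a..0} f + integral {0..u} f = integral {a..u} f"
      using that ab True by (intro Henstock_Kurzweil_Integration.integral_combine int) auto
    thus ?thesis using True by (simp add: potential_def)
  next
    case False
    have "integral {a..u} f + integral {u..0} f = integral {a..0} f"
      using that ab False by (intro Henstock_Kurzweil_Integration.integral_combine int) auto
    thus ?thesis using False by (simp add: potential_def)
  qed
  have xab: "x \<in> {a<..<b}" using ab by auto
  have "((\<lambda>u. integral {a..u} f) has_real_derivative f x) (at x within {a..b})"
    using xab ab(3) by (intro integral_has_real_derivative continuous_on_subset[OF f]) auto
  hence "((\<lambda>u. integral {a..u} f - integral {a..0} f) has_real_derivative f x) (at x)"
    using xab by (subst (asm) at_within_interior[of x]) (auto intro: derivative_eq_intros)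
  thus ?thesis
    by (rule has_field_derivative_transform_within_open[OF _ _ xab]) (auto simp: eq)
qed

lemma energy_conserved:
  fixes g Y Y' :: "real \<Rightarrow> real"
  assumes J: "open J" "is_interval J" "0 \<in> J" and g: "continuous_on J g"
    and Y: "\<And>t. (Y has_real_derivative Y' t) (at t)" and Y': "\<And>t. (Y' has_real_derivative - g (Y t)) (at t)"
    and "0 \<le> \<tau>" and inJ: "\<And>s. s \<in> {0..\<tau>} \<Longrightarrow> Y s \<in> J"
  shows "(Y' \<tau>)\<^sup>2 / 2 + potential g (Y \<tau>) = (Y' 0)\<^sup>2 / 2 + potential g (Y 0)"
proof -
  define E where "E s = (Y' s)\<^sup>2 / 2 + potential g (Y s)" for s
  have E': "(E has_real_derivative 0) (at s)" if "s \<in> {0..\<tau>}" for s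
    unfolding E_def
    by (rule derivative_eq_intros Y Y' refl
          DERIV_chain2[OF potential_has_real_derivative[OF J g inJ[OF that]] Y] | simp)+
  show ?thesis
  proof (cases "\<tau> = 0")
    case False
    have "continuous_on {0..\<tau>} E"
      using E' by (meson DERIV_isCont continuous_at_imp_continuous_on)
    hence "E \<tau> = E 0"
      using \<open>0 \<le> \<tau>\<close> False E' by (intro DERIV_isconst2[of 0 \<tau>]) auto
    thus ?thesis by (simp add: E_def)
  qed simp
qed

lemma energy_confinement_forward:
  fixes g Y Y' :: "real \<Rightarrow> real"
  assumes J: "open J" "is_interval J" "0 \<in> J" and g: "continuous_on J g" and ab: "{a..b} \<subseteq> J"
    and Y: "\<And>t. (Y has_real_derivative Y' t) (at t)" and Y': "\<And>t. (Y' has_real_derivative - g (Y t)) (at t)"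
    and start: "Y 0 \<in> {a<..<b}"
    and energy: "(Y' 0)\<^sup>2 / 2 + potential g (Y 0) < potential g a"
                "(Y' 0)\<^sup>2 / 2 + potential g (Y 0) < potential g b"
    and "t \<ge> 0"
  shows "Y t \<in> {a<..<b}"
proof (rule ccontr)
  assume exit: "Y t \<notin> {a<..<b}"
  have contY: "isCont Y s" for s using Y DERIV_isCont by blast
  define S where "S = {0..t} \<inter> Y -` (- {a<..<b})"
  have "closed S" unfolding S_def by (intro closed_Int continuous_closed_vimage contY) auto
  moreover have "t \<in> S" using exit \<open>t \<ge> 0\<close> by (simp add: S_def)
  moreover have "bdd_below S" by (auto simp: S_def bdd_below_def)
  ultimately have first: "Inf S \<in> S" "\<And>s. s \<in> S \<Longrightarrow> Inf S \<le> s"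
    using closed_contains_Inf cInf_lower by blast+
  define ts where "ts = Inf S"
  have ts: "ts \<in> {0..t}" "Y ts \<notin> {a<..<b}" using first(1) by (simp_all add: S_def ts_def)
  have before: "Y s \<in> {a<..<b}" if "0 \<le> s" "s < ts" for s
  proof -
    have "s \<notin> S" using first(2)[of s] that by (auto simp: ts_def)
    thus ?thesis using that ts(1) by (simp add: S_def)
  qed
  have "ts \<noteq> 0" using ts(2) start by auto
  hence "ts > 0" using ts(1) by simp
  have "Y ts \<in> {a..b}"
  proof (rule Lim_in_closed_set)
    show "eventually (\<lambda>s. Y s \<in> {a..b}) (at_left ts)"
      using eventually_at_left_real[OF \<open>ts > 0\<close>]
    proof eventually_elim
      case (elim s)
      thus ?case using before[of s] by simp
    qed
    show "(Y \<longlongrightarrow> Y ts) (at_left ts)"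
      using contY by (simp add: isCont_def filterlim_at_split)
  qed auto
  hence edge: "Y ts = a \<or> Y ts = b" using ts(2) by auto
  have "(Y' ts)\<^sup>2 / 2 + potential g (Y ts) = (Y' 0)\<^sup>2 / 2 + potential g (Y 0)"
  proof (rule energy_conserved[OF J g Y Y'])
    show "Y s \<in> J" if "s \<in> {0..ts}" for s
      using that before[of s] \<open>Y ts \<in> {a..b}\<close> ab by (cases "s = ts") auto
  qed (use \<open>ts > 0\<close> in simp)
  moreover have "(Y' ts)\<^sup>2 / 2 \<ge> 0" by simp
  ultimately show False using edge energy by (elim disjE; simp; linarith)
qed

lemma energy_confinement:
  fixes g Y Y' :: "real \<Rightarrow> real"
  assumes J: "open J" "is_interval J" "0 \<in> J" and g: "continuous_on J g" and ab: "{a..b} \<subseteq> J"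
    and Y: "\<And>t. (Y has_real_derivative Y' t) (at t)" and Y': "\<And>t. (Y' has_real_derivative - g (Y t)) (at t)"
    and start: "Y 0 \<in> {a<..<b}"
    and energy: "(Y' 0)\<^sup>2 / 2 + potential g (Y 0) < potential g a"
                "(Y' 0)\<^sup>2 / 2 + potential g (Y 0) < potential g b"
  shows "Y t \<in> {a<..<b}"
proof (cases "t \<ge> 0")
  case True
  show ?thesis by (rule energy_confinement_forward[OF J g ab Y Y' start energy True])
next
  case False
  have "((\<lambda>s. Y (- s)) has_real_derivative - Y' (- s)) (at s)" for s
    using DERIV_chain2[OF Y DERIV_minus[OF DERIV_ident]] by simp
  moreover have "((\<lambda>s. - Y' (- s)) has_real_derivative - g (Y (- s))) (at s)" for s
    using DERIV_minus[OF DERIV_chain2[OF Y' DERIV_minus[OF DERIV_ident]]] by simp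
  ultimately have "Y (- (- t)) \<in> {a<..<b}"
    using energy_confinement_forward[OF J g ab, of "\<lambda>s. Y (- s)" "\<lambda>s. - Y' (- s)" "- t"]
      start energy False by simp
  thus ?thesis by simp
qed

lemma small_orbits_confined:
  fixes g :: "real \<Rightarrow> real" and X Xd :: "real \<Rightarrow> real \<Rightarrow> real"
  assumes J: "open J" "is_interval J" "0 \<in> J" and g: "continuous_on J g"
    and V_incr: "strict_mono_on (J \<inter> {0<..}) (potential g)"
    and h_ex: "\<And>x. x \<in> J \<Longrightarrow> \<exists>y. y \<in> J \<and> potential g y = potential g x \<and> sgn y = - sgn x"
    and X_ode: "\<And>x t. x \<in> J \<Longrightarrow> x > 0 \<Longrightarrow>
                 ((\<lambda>s. X s x) has_real_derivative Xd t x) (at t) \<and>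
                 ((\<lambda>s. Xd s x) has_real_derivative (- g (X t x))) (at t)"
    and X_init: "\<And>x. x \<in> J \<Longrightarrow> x > 0 \<Longrightarrow> X 0 x = x \<and> Xd 0 x = 0"
    and x0: "x0 \<in> J" "x0 > 0"
  obtains a b where "x0 < b" "{a..b} \<subseteq> J" "{0<..<b} \<subseteq> J"
    "\<forall>x\<in>{0<..<b}. \<forall>t. X t x \<in> {a..b}"
proof -
  obtain a' b where "a' < x0" "x0 < b" "{a'..b} \<subseteq> J"
    using open_interval_enlarge[OF J(1,2) x0(1) x0(1)] .
  hence "b \<in> J" "x0 < b" by auto
  then obtain a where a: "a \<in> J" "potential g a = potential g b" "sgn a = - sgn b"
    using h_ex by blast
  have interval: "{u..v} \<subseteq> J" if "u \<in> J" "v \<in> J" for u v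
    using interval_subset_is_interval[OF J(2), of u v] that by (simp add: cbox_interval)
  have "{a..b} \<subseteq> J" using interval[OF a(1) \<open>b \<in> J\<close>] .
  moreover have "{0<..<b} \<subseteq> J" using interval[OF J(3) \<open>b \<in> J\<close>] by auto
  moreover have "\<forall>x\<in>{0<..<b}. \<forall>t. X t x \<in> {a..b}"
  proof (intro ballI allI)
    fix x t assume x: "x \<in> {0<..<b}"
    have "x \<in> J" using x \<open>{0<..<b} \<subseteq> J\<close> by blast
    have "potential g x < potential g b"
      using strict_mono_onD[OF V_incr] x \<open>x \<in> J\<close> \<open>b \<in> J\<close> by auto
    moreover have "a < 0" using a(3) \<open>x0 < b\<close> x0(2) by (auto simp: sgn_if split: if_splits)
    ultimately have "X t x \<in> {a<..<b}"
      using energy_confinement[OF J g \<open>{a..b} \<subseteq> J\<close>, of "\<lambda>s. X s x" "\<lambda>s. Xd s x"]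
        X_ode[OF \<open>x \<in> J\<close>] X_init[OF \<open>x \<in> J\<close>] x a(2) by auto
    thus "X t x \<in> {a..b}" by auto
  qed
  ultimately show thesis using \<open>x0 < b\<close> that by blast
qed

section \<open>Periodic functions\<close>

lemma periodic_shift_int:
  fixes f :: "real \<Rightarrow> 'a"
  assumes periodic: "\<And>t. f (t + p) = f t"
  shows "f (t + of_int k * p) = f t"
proof -
  have shift_nat: "f (s + real n * p) = f s" for s n
  proof (induction n)
    case (Suc n)
    thus ?case using periodic[of "s + real n * p"] by (simp add: algebra_simps)
  qed simp
  show ?thesis
  proof (cases k rule: int_cases2)
    case (nonpos n)
    thus ?thesis using shift_nat[of "t - real n * p" n] by simp
  qed (simp add: shift_nat)
qed

lemma bounded_range_periodic:
  fixes f :: "real \<Rightarrow> real"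
  assumes periodic: "\<And>t. f (t + p) = f t" and "p > 0" and f: "continuous_on UNIV f"
  shows "bounded (range f)"
proof -
  have "f t \<in> f ` {0..p}" for t
  proof -
    define k where "k = \<lfloor>t / p\<rfloor>"
    have "of_int k * p \<le> t" "t \<le> (of_int k + 1) * p"
      using \<open>p > 0\<close> floor_divide_lower[of p t] floor_divide_upper[of p t] by (auto simp: k_def)
    hence "t - of_int k * p \<in> {0..p}" by (simp add: algebra_simps)
    moreover have "f t = f (t - of_int k * p)"
      using periodic_shift_int[of f p, OF periodic, of "t - of_int k * p" k] by simp
    ultimately show ?thesis by blast
  qed
  hence "range f \<subseteq> f ` {0..p}" by blast
  moreover have "compact (f ` {0..p})"
    by (intro compact_continuous_image continuous_on_subset[OF f]) auto
  ultimately show ?thesis using bounded_subset compact_imp_bounded by blast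
qed

lemma periodic_derivative:
  fixes f f' :: "real \<Rightarrow> real"
  assumes f: "\<And>t. (f has_real_derivative f' t) (at t)" and periodic: "\<And>t. f (t + p) = f t"
  shows "f' (t + p) = f' t"
proof -
  have "((\<lambda>s. f (s + p)) has_real_derivative f' (t + p)) (at t)"
    using DERIV_chain2[OF f DERIV_add[OF DERIV_ident DERIV_const]] by simp
  hence "(f has_real_derivative f' (t + p)) (at t)" using periodic by simp
  thus ?thesis using f DERIV_unique by blast
qed

lemma unbounded_of_linear_drift:
  fixes y :: "real \<Rightarrow> real"
  assumes drift: "\<And>n::nat. y (t + real n * p) = y t + real n * c" and "c \<noteq> 0"
  shows "\<not> bounded (range y)"
proof
  assume "bounded (range y)"
  then obtain B where B: "\<And>s. \<bar>y s\<bar> \<le> B" unfolding bounded_iff by auto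
  obtain n :: nat where "(B + \<bar>y t\<bar>) / \<bar>c\<bar> < real n" using reals_Archimedean2 by blast
  hence "B + \<bar>y t\<bar> < real n * \<bar>c\<bar>" using \<open>c \<noteq> 0\<close> by (simp add: field_simps)
  moreover have "real n * \<bar>c\<bar> \<le> \<bar>y (t + real n * p)\<bar> + \<bar>y t\<bar>"
    using drift[of n] by (simp add: abs_mult[symmetric])
  ultimately show False using B[of "t + real n * p"] by linarith
qed

section \<open>Hill's equation with a periodic solution\<close>

locale hill_periodic_solution =
  fixes q P P' :: "real \<Rightarrow> real" and T :: real
  assumes period_pos: "T > 0"
    and q_cont: "continuous_on UNIV q" and q_periodic: "\<And>t. q (t + T) = q t"
    and P_deriv: "\<And>t. (P has_real_derivative P' t) (at t)"
    and P'_deriv: "\<And>t. (P' has_real_derivative - q t * P t) (at t)"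
    and P_periodic: "\<And>t. P (t + T) = P t"
    and P_nontrivial: "\<exists>t. P t \<noteq> 0"
begin

lemma P'_periodic: "P' (t + T) = P' t"
  by (rule periodic_derivative[OF P_deriv P_periodic])

lemma q_bounded: obtains L where "\<And>t. \<bar>q t\<bar> \<le> L"
proof -
  obtain L where "\<forall>x\<in>range q. norm x \<le> L"
    using bounded_range_periodic[OF q_periodic period_pos q_cont] unfolding bounded_iff by blast
  hence "\<bar>q t\<bar> \<le> L" for t by simp
  thus thesis by (rule that)
qed

definition amplitude_sq :: "real \<Rightarrow> real" where
  "amplitude_sq t = (P t)\<^sup>2 + (P' t)\<^sup>2"

lemma amplitude_sq_nonzero: "amplitude_sq t \<noteq> 0"
proof
  assume "amplitude_sq t = 0"
  hence zero: "P t = 0" "P' t = 0" by (simp_all add: amplitude_sq_def sum_power2_eq_zero_iff)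
  obtain L where "\<And>t. \<bar>q t\<bar> \<le> L" using q_bounded by blast
  hence "P s = 0" for s by (rule hill_zero_unique[OF P_deriv P'_deriv _ zero])
  thus False using P_nontrivial by blast
qed

lemma P_zero_imp_P'_nonzero: "P t = 0 \<Longrightarrow> P' t \<noteq> 0"
  using amplitude_sq_nonzero[of t] by (simp add: amplitude_sq_def)

text \<open>Reduction of order: \<open>secular\<close> is chosen so that the second solution
  \<open>secular \<cdot> P - P' / (P\<^sup>2 + P'\<^sup>2)\<close> has Wronskian \<open>1\<close> with \<open>P\<close>.\<close>
definition secular_rate :: "real \<Rightarrow> real" where
  "secular_rate t = (1 - q t) * ((P t)\<^sup>2 - (P' t)\<^sup>2) / (amplitude_sq t)\<^sup>2"

definition secular :: "real \<Rightarrow> real" where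
  "secular = potential secular_rate"

definition drift :: real where
  "drift = secular T"

definition second_solution :: "real \<Rightarrow> real" where
  "second_solution t = secular t * P t - P' t / amplitude_sq t"

definition second_solution' :: "real \<Rightarrow> real" where
  "second_solution' t = secular t * P' t + P t / amplitude_sq t"

lemma secular_deriv: "(secular has_real_derivative secular_rate t) (at t)"
proof -
  have "isCont P s" "isCont P' s" "isCont q s" for s
    using P_deriv P'_deriv q_cont DERIV_isCont continuous_on_eq_continuous_at by blast+
  hence "continuous_on UNIV secular_rate"
    unfolding secular_rate_def amplitude_sq_def using amplitude_sq_nonzero[unfolded amplitude_sq_def]
    by (intro continuous_at_imp_continuous_on ballI continuous_intros) auto
  thus ?thesis
    unfolding secular_def by (rule potential_has_real_derivative[OF open_UNIV is_interval_univ UNIV_I _ UNIV_I])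
qed

lemma amplitude_sq_deriv:
  "(amplitude_sq has_real_derivative 2 * (1 - q t) * P t * P' t) (at t)"
  unfolding amplitude_sq_def power2_eq_square
  by (rule DERIV_cong[OF DERIV_add[OF DERIV_mult[OF P_deriv P_deriv] DERIV_mult[OF P'_deriv P'_deriv]]])
    (simp add: algebra_simps)

lemma second_solution_deriv: "(second_solution has_real_derivative second_solution' t) (at t)"
proof -
  let ?N = "amplitude_sq t" and ?N' = "2 * (1 - q t) * P t * P' t"
  have "(second_solution has_real_derivative
      secular t * P' t + (secular_rate t * P t - ((- q t * P t) * ?N - P' t * ?N') / ?N\<^sup>2)) (at t)"
    unfolding second_solution_def
    by (rule DERIV_cong[OF DERIV_diff[OF DERIV_mult[OF secular_deriv P_deriv]
          DERIV_divide[OF P'_deriv amplitude_sq_deriv amplitude_sq_nonzero]]])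
      (simp add: power2_eq_square algebra_simps)
  moreover have "(1 - q t) * ((P t)\<^sup>2 - (P' t)\<^sup>2) * P t - ((- q t * P t) * ?N - P' t * ?N') = P t * ?N"
    by (simp add: amplitude_sq_def algebra_simps power2_eq_square)
  hence "secular_rate t * P t - ((- q t * P t) * ?N - P' t * ?N') / ?N\<^sup>2 = P t / ?N"
    using amplitude_sq_nonzero[of t]
    by (simp add: secular_rate_def diff_divide_distrib[symmetric] power2_eq_square)
  ultimately show ?thesis unfolding second_solution'_def by simp
qed

lemma second_solution'_deriv:
  "(second_solution' has_real_derivative - q t * second_solution t) (at t)"
proof -
  let ?N = "amplitude_sq t" and ?N' = "2 * (1 - q t) * P t * P' t"
  have "(second_solution' has_real_derivative
      secular t * (- q t * P t) + (secular_rate t * P' t + (P' t * ?N - P t * ?N') / ?N\<^sup>2)) (at t)"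
    unfolding second_solution'_def
    by (rule DERIV_cong[OF DERIV_add[OF DERIV_mult[OF secular_deriv P'_deriv]
          DERIV_divide[OF P_deriv amplitude_sq_deriv amplitude_sq_nonzero]]])
      (simp add: power2_eq_square algebra_simps)
  moreover have "(1 - q t) * ((P t)\<^sup>2 - (P' t)\<^sup>2) * P' t + (P' t * ?N - P t * ?N') = q t * P' t * ?N"
    by (simp add: amplitude_sq_def algebra_simps power2_eq_square)
  hence "secular_rate t * P' t + (P' t * ?N - P t * ?N') / ?N\<^sup>2 = q t * P' t / ?N"
    using amplitude_sq_nonzero[of t]
    by (simp add: secular_rate_def add_divide_distrib[symmetric] power2_eq_square)
  ultimately show ?thesis unfolding second_solution_def by (simp add: algebra_simps)
qed

lemma wronskian_second_solution: "P t * second_solution' t - P' t * second_solution t = 1"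
proof -
  have "P t * second_solution' t - P' t * second_solution t = ((P t)\<^sup>2 + (P' t)\<^sup>2) / amplitude_sq t"
    by (simp add: second_solution_def second_solution'_def algebra_simps power2_eq_square add_divide_distrib)
  thus ?thesis using amplitude_sq_nonzero[of t] by (simp add: amplitude_sq_def)
qed

lemma secular_shift: "secular (t + T) = secular t + drift"
proof -
  have rate_periodic: "secular_rate (s + T) = secular_rate s" for s
    by (simp add: secular_rate_def amplitude_sq_def q_periodic P_periodic P'_periodic)
  have "((\<lambda>s. secular (s + T) - secular s) has_real_derivative 0) (at s)" for s
    by (rule DERIV_cong[OF DERIV_diff[OF DERIV_chain2[OF secular_deriv DERIV_add[OF DERIV_ident DERIV_const]]
          secular_deriv]]) (simp add: rate_periodic)
  hence "secular (t + T) - secular t = secular (0 + T) - secular 0"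
    using DERIV_isconst_all[of "\<lambda>s. secular (s + T) - secular s" t 0] by blast
  thus ?thesis by (simp add: drift_def secular_def potential_def)
qed

lemma second_solution_shift: "second_solution (t + T) = second_solution t + drift * P t"
  by (simp only: second_solution_def secular_shift P_periodic P'_periodic amplitude_sq_def)
    (simp add: algebra_simps)

lemma second_solution'_shift: "second_solution' (t + T) = second_solution' t + drift * P' t"
  by (simp only: second_solution'_def secular_shift P_periodic P'_periodic amplitude_sq_def)
    (simp add: algebra_simps)

lemma hill_solution_second_solution: "hill_solution q second_solution"
  unfolding hill_solution_def using second_solution_deriv second_solution'_deriv by blast

lemma hill_solution_decomposition:
  assumes "hill_solution q y"
  obtains a b where "\<And>t. y t = a * P t + b * second_solution t"
proof -
  obtain y' where y: "\<And>t. (y has_real_derivative y' t) (at t)"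
    and y': "\<And>t. (y' has_real_derivative - q t * y t) (at t)"
    using assms unfolding hill_solution_def by blast
  define a where "a = y 0 * second_solution' 0 - y' 0 * second_solution 0"
  define b where "b = P 0 * y' 0 - P' 0 * y 0"
  define z where "z t = y t - a * P t - b * second_solution t" for t
  define z' where "z' t = y' t - a * P' t - b * second_solution' t" for t
  have z: "(z has_real_derivative z' t) (at t)" for t
    unfolding z_def z'_def
    by (intro DERIV_diff y DERIV_cmult P_deriv second_solution_deriv)
  have z': "(z' has_real_derivative - q t * z t) (at t)" for t
    unfolding z_def z'_def
    by (rule DERIV_cong[OF DERIV_diff[OF DERIV_diff[OF y' DERIV_cmult[OF P'_deriv]]
          DERIV_cmult[OF second_solution'_deriv]]]) (simp add: algebra_simps)
  have "z 0 = y 0 * (1 - (P 0 * second_solution' 0 - P' 0 * second_solution 0))"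
    "z' 0 = y' 0 * (1 - (P 0 * second_solution' 0 - P' 0 * second_solution 0))"
    by (simp_all add: z_def z'_def a_def b_def algebra_simps)
  hence "z 0 = 0" "z' 0 = 0" by (simp_all add: wronskian_second_solution)
  moreover obtain L where "\<And>t. \<bar>q t\<bar> \<le> L" using q_bounded by blast
  ultimately have "z t = 0" for t using hill_zero_unique[OF z z'] by blast
  thus thesis by (intro that[of a b]) (simp add: z_def algebra_simps)
qed

lemma all_solutions_periodic_iff:
  "(\<forall>y. hill_solution q y \<longrightarrow> (\<forall>t. y (t + T) = y t)) \<longleftrightarrow> drift = 0"
proof
  assume "\<forall>y. hill_solution q y \<longrightarrow> (\<forall>t. y (t + T) = y t)"
  hence "second_solution (t + T) = second_solution t" for t
    using hill_solution_second_solution by blast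
  thus "drift = 0" using P_nontrivial second_solution_shift by auto
next
  assume "drift = 0"
  show "\<forall>y. hill_solution q y \<longrightarrow> (\<forall>t. y (t + T) = y t)"
  proof (intro allI impI)
    fix y t assume "hill_solution q y"
    then obtain a b where "\<And>t. y t = a * P t + b * second_solution t"
      using hill_solution_decomposition by blast
    thus "y (t + T) = y t" using \<open>drift = 0\<close> by (simp add: P_periodic second_solution_shift)
  qed
qed

lemma unbounded_iff_not_multiple:
  assumes "drift \<noteq> 0" and "hill_solution q y"
  shows "\<not> bounded (range y) \<longleftrightarrow> \<not> (\<exists>c. \<forall>t. y t = c * P t)"
proof -
  obtain a b where y: "\<And>t. y t = a * P t + b * second_solution t"
    using hill_solution_decomposition[OF assms(2)] by blast
  have P_bounded: "bounded (range P)"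
    using bounded_range_periodic[of P T, OF P_periodic period_pos]
      P_deriv DERIV_isCont continuous_at_imp_continuous_on by blast
  show ?thesis
  proof (cases "b = 0")
    case True
    hence "range y = (\<lambda>u. a * u) ` range P" using y by auto
    hence "bounded (range y)"
      using bounded_linear_image[OF P_bounded bounded_linear_mult_right] by simp
    thus ?thesis using y True by auto
  next
    case False
    obtain t where "P t \<noteq> 0" using P_nontrivial by blast
    have shift: "y (s + T) = y s + b * drift * P s" for s
      by (simp only: y P_periodic second_solution_shift) (simp add: algebra_simps)
    have "y (t + real n * T) = y t + real n * (b * drift * P t)" for n :: nat
    proof (induction n)
      case (Suc n)
      have "P (t + real n * T) = P t"
        using periodic_shift_int[of P T, OF P_periodic, of t "int n"] by simp
      thus ?case using Suc shift[of "t + real n * T"] by (simp add: algebra_simps)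
    qed simp
    hence "\<not> bounded (range y)"
      by (rule unbounded_of_linear_drift) (use False assms(1) \<open>P t \<noteq> 0\<close> in simp)
    moreover have "\<not> (\<exists>c. \<forall>t. y t = c * P t)"
    proof
      assume "\<exists>c. \<forall>t. y t = c * P t"
      then obtain c where "\<And>t. y t = c * P t" by blast
      hence "y (t + T) = y t" by (simp add: P_periodic)
      thus False using shift[of t] False assms(1) \<open>P t \<noteq> 0\<close> by simp
    qed
    ultimately show ?thesis by simp
  qed
qed

lemma eq_drift_of_period_identity:
  assumes "P 0 = 0"
    and identity: "second_solution T * - P' 0 * T' = second_solution' T - second_solution' 0"
  shows "T' = drift * P' 0"
proof -
  have "second_solution T = - 1 / P' 0"
    using second_solution_shift[of 0] \<open>P 0 = 0\<close> P_zero_imp_P'_nonzero[OF \<open>P 0 = 0\<close>]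
    by (simp add: second_solution_def amplitude_sq_def power2_eq_square)
  thus ?thesis
    using identity second_solution'_shift[of 0] P_zero_imp_P'_nonzero[OF \<open>P 0 = 0\<close>] by simp
qed

end

section \<open>Dependence of the orbits on the initial position\<close>

lemma uniform_first_order_remainder:
  fixes f f' :: "real \<Rightarrow> real"
  assumes K: "compact K" "is_interval K"
    and f: "\<And>a. a \<in> K \<Longrightarrow> (f has_real_derivative f' a) (at a)" and f': "continuous_on K f'"
    and "\<epsilon> > 0"
  obtains \<delta> where "\<delta> > 0"
    "\<And>a b. a \<in> K \<Longrightarrow> b \<in> K \<Longrightarrow> \<bar>a - b\<bar> < \<delta> \<Longrightarrow> \<bar>f a - f b - f' b * (a - b)\<bar> \<le> \<epsilon> * \<bar>a - b\<bar>"
proof -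
  have "uniformly_continuous_on K f'" by (rule compact_uniformly_continuous[OF f' K(1)])
  then obtain \<delta> where "\<delta> > 0" and \<delta>: "\<forall>b\<in>K. \<forall>z\<in>K. dist z b < \<delta> \<longrightarrow> dist (f' z) (f' b) < \<epsilon>"
    using \<open>\<epsilon> > 0\<close> unfolding uniformly_continuous_on_def by blast
  have "\<bar>f a - f b - f' b * (a - b)\<bar> \<le> \<epsilon> * \<bar>a - b\<bar>"
    if ab: "a \<in> K" "b \<in> K" "\<bar>a - b\<bar> < \<delta>" for a b
  proof -
    have seg: "closed_segment b a \<subseteq> K"
      using ab K(2) by (simp add: closed_segment_subset is_interval_convex)
    have "norm ((f a - f' b * a) - (f b - f' b * b)) \<le> \<epsilon> * norm (a - b)"
    proof (rule field_differentiable_bound[OF convex_closed_segment])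
      fix z assume z: "z \<in> closed_segment b a"
      have "(f has_real_derivative f' z) (at z)" using f seg z by blast
      hence "((\<lambda>z. f z - f' b * z) has_real_derivative f' z - f' b * 1) (at z)"
        by (intro DERIV_diff DERIV_cmult DERIV_ident)
      thus "((\<lambda>z. f z - f' b * z) has_field_derivative f' z - f' b) (at z within closed_segment b a)"
        by (simp add: has_field_derivative_at_within)
      have "dist z b < \<delta>" using segment_bound1[OF z] ab(3) by (simp add: dist_real_def)
      moreover have "z \<in> K" using seg z by blast
      ultimately have "\<bar>f' z - f' b\<bar> < \<epsilon>" using \<delta> ab(2) by (auto simp: dist_real_def)
      thus "norm (f' z - f' b) \<le> \<epsilon>" by simp
    qed auto
    thus ?thesis by (simp add: algebra_simps)
  qed
  thus thesis using \<open>\<delta> > 0\<close> that by blast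
qed

lemma tendsto_quotient_of_quadratic_remainder:
  fixes r s d :: "'a \<Rightarrow> real"
  assumes "(s \<longlongrightarrow> 0) F" "((\<lambda>x. s x / d x) \<longlongrightarrow> c) F"
    and "eventually (\<lambda>x. \<bar>r x\<bar> \<le> C * (s x)\<^sup>2) F"
  shows "((\<lambda>x. r x / d x) \<longlongrightarrow> 0) F"
proof (rule Lim_null_comparison)
  show "eventually (\<lambda>x. norm (r x / d x) \<le> C * \<bar>s x\<bar> * \<bar>s x / d x\<bar>) F"
    using assms(3)
  proof eventually_elim
    case (elim x)
    hence "\<bar>r x\<bar> / \<bar>d x\<bar> \<le> C * (s x)\<^sup>2 / \<bar>d x\<bar>" by (simp add: divide_right_mono)
    thus ?case by (simp add: abs_divide power2_eq_square abs_mult_self)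
  qed
  have "((\<lambda>x. C * \<bar>s x\<bar> * \<bar>s x / d x\<bar>) \<longlongrightarrow> C * \<bar>0\<bar> * \<bar>c\<bar>) F"
    using assms(1,2) by (intro tendsto_intros)
  thus "((\<lambda>x. C * \<bar>s x\<bar> * \<bar>s x / d x\<bar>) \<longlongrightarrow> 0) F" by simp
qed

lemma period_defect_tendsto:
  fixes T :: "real \<Rightarrow> real"
  assumes T: "(T has_real_derivative T') (at x0)"
  shows "((\<lambda>x. T x0 - T x) \<longlongrightarrow> 0) (at x0)"
    and "((\<lambda>x. (T x0 - T x) / (x - x0)) \<longlongrightarrow> - T') (at x0)"
proof -
  have "(T \<longlongrightarrow> T x0) (at x0)" using DERIV_isCont[OF T] by (simp add: isCont_def)
  from tendsto_diff[OF tendsto_const[of "T x0"] this] show "((\<lambda>x. T x0 - T x) \<longlongrightarrow> 0) (at x0)" by simp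
  show "((\<lambda>x. (T x0 - T x) / (x - x0)) \<longlongrightarrow> - T') (at x0)"
    using tendsto_minus[OF T[unfolded has_field_derivative_iff]] by (simp add: minus_divide_left)
qed

locale oscillator_flow =
  fixes g g' :: "real \<Rightarrow> real" and K U :: "real set" and X Xd :: "real \<Rightarrow> real \<Rightarrow> real"
  assumes K_compact: "compact K" and K_interval: "is_interval K"
    and g_deriv: "\<And>a. a \<in> K \<Longrightarrow> (g has_real_derivative g' a) (at a)"
    and g'_cont: "continuous_on K g'"
    and flow_deriv: "\<And>x t. x \<in> U \<Longrightarrow> ((\<lambda>s. X s x) has_real_derivative Xd t x) (at t)"
    and flow_velocity_deriv: "\<And>x t. x \<in> U \<Longrightarrow> ((\<lambda>s. Xd s x) has_real_derivative - g (X t x)) (at t)"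
    and flow_init: "\<And>x. x \<in> U \<Longrightarrow> X 0 x = x" "\<And>x. x \<in> U \<Longrightarrow> Xd 0 x = 0"
    and flow_in_K: "\<And>x t. x \<in> U \<Longrightarrow> X t x \<in> K"
begin

lemma start_in_K: "x \<in> U \<Longrightarrow> x \<in> K"
  using flow_in_K[of x 0] flow_init(1) by simp

lemma g'_bounded: obtains L where "L \<ge> 0" "\<And>a. a \<in> K \<Longrightarrow> \<bar>g' a\<bar> \<le> L"
  using continuous_on_compact_bound[OF K_compact g'_cont] by auto

lemma g_bounded: obtains B where "B \<ge> 0" "\<And>a. a \<in> K \<Longrightarrow> \<bar>g a\<bar> \<le> B"
proof -
  have "continuous_on K g"
    using g_deriv by (meson DERIV_isCont continuous_at_imp_continuous_on)
  then obtain B where "B \<ge> 0" "\<And>a. a \<in> K \<Longrightarrow> norm (g a) \<le> B"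
    using continuous_on_compact_bound[OF K_compact] by blast
  thus thesis by (intro that) auto
qed

lemma g_lipschitz:
  assumes "\<And>a. a \<in> K \<Longrightarrow> \<bar>g' a\<bar> \<le> L" "a \<in> K" "b \<in> K"
  shows "\<bar>g a - g b\<bar> \<le> L * \<bar>a - b\<bar>"
  using field_differentiable_bound[OF is_interval_convex[OF K_interval], of g g' L a b]
    assms g_deriv by (auto intro: has_field_derivative_at_within)

lemma flow_velocity_bound:
  assumes B: "\<And>a. a \<in> K \<Longrightarrow> \<bar>g a\<bar> \<le> B" and "x \<in> U"
  shows "\<bar>Xd u x\<bar> \<le> B * \<bar>u\<bar>"
  using field_differentiable_bound[OF convex_UNIV, of "\<lambda>s. Xd s x" "\<lambda>s. - g (X s x)" B u 0]
    flow_velocity_deriv flow_init(2) B flow_in_K \<open>x \<in> U\<close> by (auto intro: has_field_derivative_at_within)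

lemma flow_displacement_bound:
  assumes B: "\<And>a. a \<in> K \<Longrightarrow> \<bar>g a\<bar> \<le> B" and "x \<in> U"
  shows "\<bar>X u x - x\<bar> \<le> B * u\<^sup>2"
proof -
  have "norm (X u x - X 0 x) \<le> (B * \<bar>u\<bar>) * norm (u - 0)"
  proof (rule field_differentiable_bound[OF convex_closed_segment, of 0 u])
    fix z assume "z \<in> closed_segment 0 u"
    hence "\<bar>z\<bar> \<le> \<bar>u\<bar>" using segment_bound1 by fastforce
    thus "norm (Xd z x) \<le> B * \<bar>u\<bar>"
      using flow_velocity_bound[OF B \<open>x \<in> U\<close>, of z] B[OF start_in_K[OF \<open>x \<in> U\<close>]]
      by (smt (verit) abs_ge_zero mult_left_mono real_norm_def)
  qed (use flow_deriv \<open>x \<in> U\<close> in \<open>auto intro: has_field_derivative_at_within\<close>)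
  thus ?thesis using flow_init(1)[OF \<open>x \<in> U\<close>] by (simp add: power2_eq_square abs_mult)
qed

lemma flow_velocity_expansion:
  assumes B: "\<And>a. a \<in> K \<Longrightarrow> \<bar>g a\<bar> \<le> B" and L: "\<And>a. a \<in> K \<Longrightarrow> \<bar>g' a\<bar> \<le> L" "L \<ge> 0"
    and "x \<in> U"
  shows "\<bar>Xd u x + u * g x\<bar> \<le> L * B * u\<^sup>2 * \<bar>u\<bar>"
proof -
  have "norm ((Xd u x + u * g x) - (Xd 0 x + 0 * g x)) \<le> (L * B * u\<^sup>2) * norm (u - 0)"
  proof (rule field_differentiable_bound[OF convex_closed_segment, of 0 u])
    fix z assume "z \<in> closed_segment 0 u"
    hence "z\<^sup>2 \<le> u\<^sup>2" using segment_bound1 abs_le_square_iff by fastforce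
    have "\<bar>g (X z x) - g x\<bar> \<le> L * \<bar>X z x - x\<bar>"
      using g_lipschitz[OF L(1) flow_in_K start_in_K] \<open>x \<in> U\<close> by blast
    also have "\<dots> \<le> L * (B * u\<^sup>2)"
      using flow_displacement_bound[OF B \<open>x \<in> U\<close>, of z] \<open>z\<^sup>2 \<le> u\<^sup>2\<close> B[OF start_in_K[OF \<open>x \<in> U\<close>]] L(2)
      by (smt (verit) abs_ge_zero mult_left_mono)
    finally show "norm (- g (X z x) + g x) \<le> L * B * u\<^sup>2" by (simp add: mult.assoc)
  next
    fix z
    have "((\<lambda>s. Xd s x + s * g x) has_real_derivative - g (X z x) + 1 * g x) (at z)"
      using flow_velocity_deriv[OF \<open>x \<in> U\<close>] by (intro DERIV_add DERIV_cmult_right DERIV_ident)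
    thus "((\<lambda>s. Xd s x + s * g x) has_field_derivative - g (X z x) + g x) (at z within closed_segment 0 u)"
      by (simp add: has_field_derivative_at_within)
  qed auto
  thus ?thesis using flow_init(2)[OF \<open>x \<in> U\<close>] by (simp add: abs_mult)
qed

lemma flow_difference_bound:
  assumes L: "\<And>a. a \<in> K \<Longrightarrow> \<bar>g' a\<bar> \<le> L" "L \<ge> 0"
    and x: "x \<in> U" "x' \<in> U" and t: "0 \<le> t" "t \<le> \<tau>"
  shows "\<bar>X t x - X t x'\<bar> \<le> exp ((1 + L) * \<tau>) * \<bar>x - x'\<bar>"
proof -
  let ?M = "exp ((1 + L) * \<tau>)"
  have "(X t x - X t x')\<^sup>2 + (Xd t x - Xd t x')\<^sup>2
      \<le> ((X 0 x - X 0 x')\<^sup>2 + (Xd 0 x - Xd 0 x')\<^sup>2) * exp ((1 + L) * t)"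
  proof (rule second_order_energy_growth[OF _ _ _ L(2) t(1)])
    show "((\<lambda>s. X s x - X s x') has_real_derivative Xd s x - Xd s x') (at s)" for s
      by (rule DERIV_diff[OF flow_deriv[OF x(1)] flow_deriv[OF x(2)]])
    show "((\<lambda>s. Xd s x - Xd s x') has_real_derivative - g (X s x) - - g (X s x')) (at s)" for s
      by (rule DERIV_diff[OF flow_velocity_deriv[OF x(1)] flow_velocity_deriv[OF x(2)]])
    show "\<bar>- g (X s x) - - g (X s x')\<bar> \<le> L * \<bar>X s x - X s x'\<bar>" for s
      using g_lipschitz[OF L(1) flow_in_K[OF x(1)] flow_in_K[OF x(2)]] by (simp add: abs_minus_commute)
  qed
  hence "(X t x - X t x')\<^sup>2 + (Xd t x - Xd t x')\<^sup>2 \<le> (x - x')\<^sup>2 * exp ((1 + L) * t)"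
    using flow_init x by simp
  hence "(X t x - X t x')\<^sup>2 \<le> (x - x')\<^sup>2 * exp ((1 + L) * t)"
    using zero_le_power2[of "Xd t x - Xd t x'"] by linarith
  also have "\<dots> \<le> (x - x')\<^sup>2 * ?M"
    using t L(2) by (simp add: mult_left_mono)
  also have "\<dots> \<le> (x - x')\<^sup>2 * ?M\<^sup>2"
    using L(2) t by (intro mult_left_mono) (simp_all add: power2_eq_square)
  finally have "(X t x - X t x')\<^sup>2 \<le> (?M * \<bar>x - x'\<bar>)\<^sup>2"
    by (simp add: power_mult_distrib mult.commute)
  thus ?thesis using abs_le_square_iff[of "X t x - X t x'" "?M * \<bar>x - x'\<bar>"] by (simp add: abs_mult)
qed

text \<open>Along the reference orbit, \<open>y\<close> and the difference quotient of two orbits have an almost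
  constant Wronskian: its derivative is \<open>y\<close> times the first-order Taylor remainder of \<open>g\<close>.\<close>
lemma wronskian_flow_quotient_estimate:
  assumes L: "\<And>a. a \<in> K \<Longrightarrow> \<bar>g' a\<bar> \<le> L" "L \<ge> 0"
    and y: "\<And>t. (y has_real_derivative y' t) (at t)"
    and y': "\<And>t. (y' has_real_derivative - g' (X t x0) * y t) (at t)"
    and Y: "\<And>t. t \<in> {0..\<tau>} \<Longrightarrow> \<bar>y t\<bar> \<le> Y"
    and remainder: "\<And>a b. a \<in> K \<Longrightarrow> b \<in> K \<Longrightarrow> \<bar>a - b\<bar> < \<delta> \<Longrightarrow>
                      \<bar>g a - g b - g' b * (a - b)\<bar> \<le> \<epsilon> * \<bar>a - b\<bar>"
    and x: "x0 \<in> U" "x \<in> U" "x \<noteq> x0" "exp ((1 + L) * \<tau>) * \<bar>x - x0\<bar> < \<delta>"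
    and "0 \<le> \<tau>" "0 \<le> \<epsilon>"
  shows "\<bar>(y \<tau> * (Xd \<tau> x - Xd \<tau> x0) - y' \<tau> * (X \<tau> x - X \<tau> x0)) / (x - x0) + y' 0\<bar>
           \<le> Y * (\<epsilon> * exp ((1 + L) * \<tau>)) * \<tau>"
proof -
  let ?M = "exp ((1 + L) * \<tau>)"
  define W where "W t = (y t * (Xd t x - Xd t x0) - y' t * (X t x - X t x0)) / (x - x0)" for t
  define R where "R t = g (X t x) - g (X t x0) - g' (X t x0) * (X t x - X t x0)" for t
  have W': "(W has_real_derivative - y t * R t / (x - x0)) (at t)" for t
    unfolding W_def
    by (rule DERIV_cong[OF DERIV_cdivide[OF DERIV_diff[OF
          DERIV_mult[OF y DERIV_diff[OF flow_velocity_deriv[OF x(2)] flow_velocity_deriv[OF x(1)]]]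
          DERIV_mult[OF y' DERIV_diff[OF flow_deriv[OF x(2)] flow_deriv[OF x(1)]]]]]])
      (simp add: R_def algebra_simps)
  have "\<bar>- y t * R t / (x - x0)\<bar> \<le> Y * (\<epsilon> * ?M)" if t: "t \<in> {0..\<tau>}" for t
  proof -
    have close: "\<bar>X t x - X t x0\<bar> \<le> ?M * \<bar>x - x0\<bar>"
      using flow_difference_bound[OF L x(2,1)] t by simp
    have "\<bar>R t\<bar> \<le> \<epsilon> * \<bar>X t x - X t x0\<bar>"
      unfolding R_def using close x(4) by (intro remainder flow_in_K x(1,2)) simp
    also have "\<dots> \<le> \<epsilon> * (?M * \<bar>x - x0\<bar>)" using close \<open>0 \<le> \<epsilon>\<close> by (rule mult_left_mono)
    finally have "\<bar>R t\<bar> / \<bar>x - x0\<bar> \<le> \<epsilon> * ?M" using x(3) by (simp add: divide_le_eq)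
    hence "\<bar>y t\<bar> * (\<bar>R t\<bar> / \<bar>x - x0\<bar>) \<le> Y * (\<epsilon> * ?M)"
      using Y[OF t] by (intro mult_mono) auto
    thus ?thesis by (simp add: abs_mult abs_divide)
  qed
  hence "norm (W \<tau> - W 0) \<le> Y * (\<epsilon> * ?M) * norm (\<tau> - 0)"
    using \<open>0 \<le> \<tau>\<close> W'
    by (intro field_differentiable_bound[OF convex_real_interval(5)]) (auto intro: has_field_derivative_at_within)
  moreover have "W 0 = - y' 0" using x flow_init by (simp add: W_def)
  ultimately show ?thesis using \<open>0 \<le> \<tau>\<close> by (simp add: W_def)
qed

lemma wronskian_flow_quotient_tendsto:
  assumes "open U" "x0 \<in> U" "0 \<le> \<tau>"
    and y: "\<And>t. (y has_real_derivative y' t) (at t)"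
    and y': "\<And>t. (y' has_real_derivative - g' (X t x0) * y t) (at t)"
  shows "((\<lambda>x. (y \<tau> * (Xd \<tau> x - Xd \<tau> x0) - y' \<tau> * (X \<tau> x - X \<tau> x0)) / (x - x0)) \<longlongrightarrow> - y' 0) (at x0)"
proof -
  obtain L where L: "L \<ge> 0" "\<And>a. a \<in> K \<Longrightarrow> \<bar>g' a\<bar> \<le> L" using g'_bounded by blast
  have "continuous_on {0..\<tau>} y" using y by (meson DERIV_isCont continuous_at_imp_continuous_on)
  then obtain Y where Y: "Y \<ge> 0" "\<And>t. t \<in> {0..\<tau>} \<Longrightarrow> \<bar>y t\<bar> \<le> Y"
    using continuous_on_compact_bound[of "{0..\<tau>}" y] by auto
  obtain e where "e > 0" "ball x0 e \<subseteq> U" using openE[OF assms(1,2)] .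
  let ?M = "exp ((1 + L) * \<tau>)"
  show ?thesis
    unfolding LIM_eq
  proof (intro allI impI)
    fix r :: real assume "r > 0"
    define \<epsilon> where "\<epsilon> = r / (Y * ?M * \<tau> + 1)"
    have "Y * ?M * \<tau> \<ge> 0" using Y(1) \<open>0 \<le> \<tau>\<close> by simp
    hence "\<epsilon> > 0" and "Y * (\<epsilon> * ?M) * \<tau> < r"
      using \<open>r > 0\<close> by (simp_all add: \<epsilon>_def field_simps)
    obtain \<delta> where "\<delta> > 0" and remainder: "\<And>a b. a \<in> K \<Longrightarrow> b \<in> K \<Longrightarrow> \<bar>a - b\<bar> < \<delta> \<Longrightarrow>
        \<bar>g a - g b - g' b * (a - b)\<bar> \<le> \<epsilon> * \<bar>a - b\<bar>"
      using uniform_first_order_remainder[OF K_compact K_interval g_deriv g'_cont \<open>\<epsilon> > 0\<close>] by blast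
    show "\<exists>s>0. \<forall>x. x \<noteq> x0 \<and> norm (x - x0) < s \<longrightarrow>
        norm ((y \<tau> * (Xd \<tau> x - Xd \<tau> x0) - y' \<tau> * (X \<tau> x - X \<tau> x0)) / (x - x0) - - y' 0) < r"
    proof (intro exI[of _ "min e (\<delta> / ?M)"] conjI allI impI)
      show "min e (\<delta> / ?M) > 0" using \<open>e > 0\<close> \<open>\<delta> > 0\<close> by simp
      fix x assume x: "x \<noteq> x0 \<and> norm (x - x0) < min e (\<delta> / ?M)"
      hence "x \<in> U" using \<open>ball x0 e \<subseteq> U\<close> by (auto simp: dist_real_def)
      moreover have "?M * \<bar>x - x0\<bar> < \<delta>" using x by (simp add: field_simps)
      ultimately have "\<bar>(y \<tau> * (Xd \<tau> x - Xd \<tau> x0) - y' \<tau> * (X \<tau> x - X \<tau> x0)) / (x - x0) + y' 0\<bar>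
          \<le> Y * (\<epsilon> * ?M) * \<tau>"
        using x \<open>0 \<le> \<tau>\<close> \<open>\<epsilon> > 0\<close> assms(2)
        by (intro wronskian_flow_quotient_estimate[OF L(2,1) y y' Y(2) remainder]) auto
      thus "norm ((y \<tau> * (Xd \<tau> x - Xd \<tau> x0) - y' \<tau> * (X \<tau> x - X \<tau> x0)) / (x - x0) - - y' 0) < r"
        using \<open>Y * (\<epsilon> * ?M) * \<tau> < r\<close> by simp
    qed
  qed
qed

lemma period_velocity_quotient_tendsto:
  assumes "open U" "x0 \<in> U" and periodic: "\<And>x t. x \<in> U \<Longrightarrow> X (t + T x) x = X t x"
    and T: "(T has_real_derivative T') (at x0)"
  shows "((\<lambda>x. Xd (T x0) x / (x - x0)) \<longlongrightarrow> g x0 * T') (at x0)"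
proof -
  define s where "s x = T x0 - T x" for x
  note s = period_defect_tendsto(1)[OF T, folded s_def]
    and s_quotient = period_defect_tendsto(2)[OF T, folded s_def]
  obtain L where L: "L \<ge> 0" "\<And>a. a \<in> K \<Longrightarrow> \<bar>g' a\<bar> \<le> L" using g'_bounded by blast
  obtain B where B: "B \<ge> 0" "\<And>a. a \<in> K \<Longrightarrow> \<bar>g a\<bar> \<le> B" using g_bounded by blast
  have "eventually (\<lambda>x. \<bar>s x\<bar> < 1) (at x0)"
    using order_tendstoD(2)[OF tendsto_rabs[OF s], of 1] by simp
  hence near: "eventually (\<lambda>x. x \<in> U \<and> \<bar>s x\<bar> < 1) (at x0)"
    by (rule eventually_conj[OF eventually_at_in_open'[OF assms(1,2)]])
  have "eventually (\<lambda>x. \<bar>Xd (s x) x + s x * g x\<bar> \<le> L * B * (s x)\<^sup>2) (at x0)"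
    using near
  proof eventually_elim
    case (elim x)
    hence "\<bar>Xd (s x) x + s x * g x\<bar> \<le> L * B * (s x)\<^sup>2 * \<bar>s x\<bar>"
      by (intro flow_velocity_expansion[OF B(2) L(2,1)]) auto
    also have "\<dots> \<le> L * B * (s x)\<^sup>2" using elim L(1) B(1) by (simp add: mult_left_le)
    finally show ?case .
  qed
  hence "((\<lambda>x. (Xd (s x) x + s x * g x) / (x - x0)) \<longlongrightarrow> 0) (at x0)"
    by (rule tendsto_quotient_of_quadratic_remainder[OF s s_quotient])
  moreover have "((\<lambda>x. g x * (s x / (x - x0))) \<longlongrightarrow> g x0 * - T') (at x0)"
    using DERIV_isCont[OF g_deriv[OF start_in_K[OF assms(2)]]]
    by (intro tendsto_mult s_quotient) (simp add: isCont_def)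
  ultimately have "((\<lambda>x. (Xd (s x) x + s x * g x) / (x - x0) - g x * (s x / (x - x0)))
      \<longlongrightarrow> 0 - g x0 * - T') (at x0)"
    by (rule tendsto_diff)
  moreover have "eventually (\<lambda>x. (Xd (s x) x + s x * g x) / (x - x0) - g x * (s x / (x - x0))
      = Xd (T x0) x / (x - x0)) (at x0)"
    using eventually_at_in_open'[OF assms(1,2)]
  proof eventually_elim
    case (elim x)
    have "Xd (T x0) x = Xd (s x + T x) x" by (simp add: s_def)
    also have "\<dots> = Xd (s x) x"
      by (rule periodic_derivative[OF flow_deriv[OF elim] periodic[OF elim]])
    finally show ?case by (simp add: add_divide_distrib)
  qed
  ultimately show ?thesis by (simp add: tendsto_cong)
qed

lemma period_position_quotient_tendsto:
  assumes "open U" "x0 \<in> U" and periodic: "\<And>x t. x \<in> U \<Longrightarrow> X (t + T x) x = X t x"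
    and T: "(T has_real_derivative T') (at x0)"
  shows "((\<lambda>x. (X (T x0) x - x0) / (x - x0)) \<longlongrightarrow> 1) (at x0)"
proof -
  define s where "s x = T x0 - T x" for x
  note s = period_defect_tendsto(1)[OF T, folded s_def]
    and s_quotient = period_defect_tendsto(2)[OF T, folded s_def]
  obtain B where B: "B \<ge> 0" "\<And>a. a \<in> K \<Longrightarrow> \<bar>g a\<bar> \<le> B" using g_bounded by blast
  have "eventually (\<lambda>x. \<bar>X (s x) x - x\<bar> \<le> B * (s x)\<^sup>2) (at x0)"
    using eventually_at_in_open'[OF assms(1,2)]
    by eventually_elim (rule flow_displacement_bound[OF B(2)])
  hence "((\<lambda>x. (X (s x) x - x) / (x - x0)) \<longlongrightarrow> 0) (at x0)"
    by (rule tendsto_quotient_of_quadratic_remainder[OF s s_quotient])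
  hence "((\<lambda>x. (X (s x) x - x) / (x - x0) + 1) \<longlongrightarrow> 0 + 1) (at x0)"
    by (intro tendsto_add tendsto_const)
  moreover have "eventually (\<lambda>x. (X (s x) x - x) / (x - x0) + 1 = (X (T x0) x - x0) / (x - x0)) (at x0)"
    using eventually_at_in_open[OF assms(1,2)]
  proof eventually_elim
    case (elim x)
    have "X (T x0) x = X (s x + T x) x" by (simp add: s_def)
    also have "\<dots> = X (s x) x" using elim by (intro periodic) simp
    finally show ?case using elim by (simp add: field_simps)
  qed
  ultimately show ?thesis by (simp add: tendsto_cong)
qed

text \<open>Differentiating \<open>X (T x) x = x\<close> and \<open>Xd (T x) x = 0\<close> in \<open>x\<close> at \<open>x0\<close> and pairing the
  result with \<open>y\<close> through the conserved Wronskian.\<close>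
lemma period_derivative_identity:
  assumes "open U" "x0 \<in> U" and periodic: "\<And>x t. x \<in> U \<Longrightarrow> X (t + T x) x = X t x"
    and T: "(T has_real_derivative T') (at x0)" and "T x0 \<ge> 0"
    and y: "\<And>t. (y has_real_derivative y' t) (at t)"
    and y': "\<And>t. (y' has_real_derivative - g' (X t x0) * y t) (at t)"
  shows "y (T x0) * g x0 * T' = y' (T x0) - y' 0"
proof -
  have X0: "X (T x0) x0 = x0" using periodic[OF assms(2), of 0] flow_init(1)[OF assms(2)] by simp
  have Xd0: "Xd (T x0) x0 = 0"
    using periodic_derivative[OF flow_deriv[OF assms(2)] periodic[OF assms(2)], of 0]
      flow_init(2)[OF assms(2)] by simp
  have "((\<lambda>x. y (T x0) * (Xd (T x0) x / (x - x0)) - y' (T x0) * ((X (T x0) x - x0) / (x - x0)))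
      \<longlongrightarrow> y (T x0) * (g x0 * T') - y' (T x0) * 1) (at x0)"
    by (intro tendsto_diff tendsto_mult tendsto_const
        period_velocity_quotient_tendsto[OF assms(1,2) periodic T]
        period_position_quotient_tendsto[OF assms(1,2) periodic T])
  moreover have "((\<lambda>x. y (T x0) * (Xd (T x0) x / (x - x0)) - y' (T x0) * ((X (T x0) x - x0) / (x - x0)))
      \<longlongrightarrow> - y' 0) (at x0)"
    using wronskian_flow_quotient_tendsto[OF assms(1,2,5) y y'] X0 Xd0
    by (simp add: divide_inverse algebra_simps)
  ultimately show ?thesis by (auto dest: tendsto_unique[rotated] simp: algebra_simps)
qed

lemma hill_periodic_orbit:
  assumes "x0 \<in> U" and periodic: "\<forall>t. X (t + T0) x0 = X t x0" and "T0 > 0"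
    and minimal: "\<forall>p. 0 < p \<and> p < T0 \<longrightarrow> \<not> (\<forall>t. X (t + p) x0 = X t x0)"
  shows "hill_periodic_solution (\<lambda>t. g' (X t x0)) (\<lambda>t. Xd t x0) (\<lambda>t. - g (X t x0)) T0"
proof
  have "continuous_on UNIV (\<lambda>t. X t x0)"
    using flow_deriv[OF \<open>x0 \<in> U\<close>] by (meson DERIV_isCont continuous_at_imp_continuous_on)
  thus "continuous_on UNIV (\<lambda>t. g' (X t x0))"
    using flow_in_K[OF \<open>x0 \<in> U\<close>] by (intro continuous_on_compose2[OF g'_cont]) auto
  show "((\<lambda>t. - g (X t x0)) has_real_derivative - g' (X t x0) * Xd t x0) (at t)" for t
    using DERIV_minus[OF DERIV_chain2[OF g_deriv[OF flow_in_K[OF \<open>x0 \<in> U\<close>]] flow_deriv[OF \<open>x0 \<in> U\<close>]]]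
    by simp
  show "Xd (t + T0) x0 = Xd t x0" for t
    using periodic_derivative[OF flow_deriv[OF \<open>x0 \<in> U\<close>]] periodic by blast
  show "\<exists>t. Xd t x0 \<noteq> 0"
  proof (rule ccontr)
    assume "\<not> (\<exists>t. Xd t x0 \<noteq> 0)"
    hence "X t x0 = X 0 x0" for t
      using flow_deriv[OF \<open>x0 \<in> U\<close>] DERIV_isconst_all[of "\<lambda>s. X s x0"] by fastforce
    moreover have "0 < T0 / 2" "T0 / 2 < T0" using \<open>T0 > 0\<close> by auto
    ultimately show False using minimal by (metis (no_types, lifting))
  qed
qed (use assms flow_deriv flow_velocity_deriv in auto)

end

theorem proposition3p2:
  fixes g g' :: "real \<Rightarrow> real" and J :: "real set"
    and X Xd :: "real \<Rightarrow> real \<Rightarrow> real"   \<comment> \<open>X t x0, and its time derivative Xd t x0\<close>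
    and T :: "real \<Rightarrow> real" and x0 :: real
  assumes J: "open J" "is_interval J" "0 \<in> J"
    and g_C1: "\<And>x. x \<in> J \<Longrightarrow> (g has_real_derivative g' x) (at x)" "continuous_on J g'"
    and g0: "g 0 = 0" and g'0: "g' 0 > 0"
    and V_incr: "strict_mono_on (J \<inter> {0<..}) (potential g)"
    and V_decr: "\<And>x y. x \<in> J \<Longrightarrow> y \<in> J \<Longrightarrow> x < y \<Longrightarrow> y < 0 \<Longrightarrow>
                   potential g y < potential g x"
    and h_ex: "\<And>x. x \<in> J \<Longrightarrow>
                 \<exists>!y. y \<in> J \<and> potential g y = potential g x \<and> sgn y = - sgn x"
    and X_ode: "\<And>x t. x \<in> J \<Longrightarrow> x > 0 \<Longrightarrow>
                 ((\<lambda>s. X s x) has_real_derivative Xd t x) (at t) \<and>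
                 ((\<lambda>s. Xd s x) has_real_derivative (- g (X t x))) (at t)"
    and X_init: "\<And>x. x \<in> J \<Longrightarrow> x > 0 \<Longrightarrow> X 0 x = x \<and> Xd 0 x = 0"
    and T_period: "\<And>x. x \<in> J \<Longrightarrow> x > 0 \<Longrightarrow>
                 T x > 0 \<and> (\<forall>t. X (t + T x) x = X t x) \<and>
                 (\<forall>p. 0 < p \<and> p < T x \<longrightarrow> \<not> (\<forall>t. X (t + p) x = X t x))"
    and T_diff: "T differentiable (at x0)"
    and x0: "x0 \<in> J" "x0 > 0"
  shows "((\<forall>y. hill_solution (\<lambda>t. g' (X t x0)) y \<longrightarrow> (\<forall>t. y (t + T x0) = y t))
          \<or> (\<forall>y. hill_solution (\<lambda>t. g' (X t x0)) y \<longrightarrow>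
                (\<not> bounded (range y) \<longleftrightarrow> \<not> (\<exists>c. \<forall>t. y t = c * Xd t x0))))
        \<and> ((\<forall>y. hill_solution (\<lambda>t. g' (X t x0)) y \<longrightarrow> (\<forall>t. y (t + T x0) = y t))
             \<longleftrightarrow> deriv T x0 = 0)"
proof -
  have g_cont: "continuous_on J g"
    using g_C1(1) by (meson DERIV_isCont continuous_at_imp_continuous_on)
  obtain a b where ab: "x0 < b" "{a..b} \<subseteq> J" "{0<..<b} \<subseteq> J"
    and confined: "\<forall>x\<in>{0<..<b}. \<forall>t. X t x \<in> {a..b}"
    by (rule small_orbits_confined[OF J g_cont V_incr h_ex[THEN ex1_implies_ex] X_ode X_init x0])
  have U: "x \<in> {0<..<b} \<Longrightarrow> x \<in> J \<and> x > 0" for x using ab(3) by auto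
  interpret flow: oscillator_flow g g' "{a..b}" "{0<..<b}" X Xd
    using ab(2) g_C1 X_ode X_init confined U by unfold_locales (auto intro: continuous_on_subset)
  have x0U: "x0 \<in> {0<..<b}" using x0 ab(1) by simp
  have periodic: "x \<in> {0<..<b} \<Longrightarrow> X (t + T x) x = X t x" for x t using T_period U by blast
  interpret hill: hill_periodic_solution "\<lambda>t. g' (X t x0)" "\<lambda>t. Xd t x0" "\<lambda>t. - g (X t x0)" "T x0"
    using T_period[OF x0] by (intro flow.hill_periodic_orbit[OF x0U]) auto
  have T': "(T has_real_derivative deriv T x0) (at x0)"
    using T_diff DERIV_deriv_iff_real_differentiable by blast
  have "hill.second_solution (T x0) * g x0 * deriv T x0
      = hill.second_solution' (T x0) - hill.second_solution' 0"
    using T_period[OF x0]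
    by (intro flow.period_derivative_identity[OF _ x0U periodic T' _ hill.second_solution_deriv
          hill.second_solution'_deriv]) auto
  hence "deriv T x0 = hill.drift * - g (X 0 x0)"
    using X_init[OF x0] by (intro hill.eq_drift_of_period_identity) simp_all
  moreover have "g (X 0 x0) \<noteq> 0" using hill.P_zero_imp_P'_nonzero[of 0] X_init[OF x0] by simp
  ultimately have "deriv T x0 = 0 \<longleftrightarrow> hill.drift = 0" by simp
  thus ?thesis using hill.all_solutions_periodic_iff hill.unbounded_iff_not_multiple by blast
qed

end
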